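(* Let $n \ge 3$, let $x_1 < x_2 < \cdots < x_n$ and $y_1 < y_2 < \cdots < y_n$ be real numbers, and let $A = [e^{x_i y_j}]_{i,j=1,\ldots,n}$. Define $u_j := y_{j+1} - y_1$ for $j=1,\ldots,n-1$, and $s(\mathbf{x}) := x_1+\cdots+x_n$. Then $$\det(A) = e^{s(\mathbf{x}) y_1}\, u_1 u_2\cdots u_{n-1} \int_{x_{n-1}}^{x_n}\cdots\int_{x_2}^{x_3}\int_{x_1}^{x_2} \det(B)\, dt_1\, dt_2\cdots dt_{n-1},$$ where $B$ is the $(n-1)\times(n-1)$ matrix $B = [e^{t_i u_j}]_{i,j=1,\ldots,n-1}$ (depending on the integration variables $t_1,\ldots,t_{n-1}$, with $t_k$ ranging over $[x_k,x_{k+1}]$). *)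

theory Defs
  imports "HOL-Analysis.Analysis" "Jordan_Normal_Form.Determinant"
begin

text \<open>Iterated integral over the variables t_0,...,t_{m-1} (0-based), with t_k ranging
  over [a k, b k]; the innermost integral is over t_0 and the outermost over t_{m-1}.
  The argument t is the assignment of the already fixed (outer) variables.\<close>
fun iter_integral :: "nat \<Rightarrow> (nat \<Rightarrow> real) \<Rightarrow> (nat \<Rightarrow> real) \<Rightarrow> ((nat \<Rightarrow> real) \<Rightarrow> real) \<Rightarrow> (nat \<Rightarrow> real) \<Rightarrow> real" where
  "iter_integral 0 a b f t = f t"
| "iter_integral (Suc m) a b f t =
     integral {a m..b m} (\<lambda>s. iter_integral m a b f (t(m := s)))"

end

theory Submission
  imports Defs
begin

text \<open>Factoring \<open>exp (x_i y_1)\<close> out of row \<open>i\<close> leaves a matrix whose first column consists of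
  ones. Subtracting from each row the previous one and expanding along the first column turns
  \<open>det A\<close> into \<open>exp (s(x) y_1)\<close> times the determinant of the \<open>(n-1) \<times> (n-1)\<close> matrix with entries
  \<open>exp (x_{i+1} u_j) - exp (x_i u_j) = u_j \<integral>[x_i, x_{i+1}] exp (t u_j) dt\<close>. After pulling the
  factors \<open>u_j\<close> out of the columns, it remains to see that the determinant of a matrix of
  one-variable integrals, row \<open>i\<close> being integrated in its own variable \<open>t_i\<close>, is the iterated
  integral of the determinant: by the Leibniz formula both are the same signed sum of products
  of one-variable integrals.\<close>

lemma det_mat_leibniz:
  "Determinant.det (mat n n (\<lambda>(i, j). f i j)) =
    (\<Sum>p\<in>{p. p permutes {..<n}}. signof p * (\<Prod>i<n. f i (p i)))"
  by (subst det_def'[of _ n]) (auto intro!: sum.cong prod.cong simp: permutes_in_image atLeast0LessThan)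

lemma det_scale_rows:
  fixes r :: "nat \<Rightarrow> 'a :: comm_ring_1"
  shows "Determinant.det (mat n n (\<lambda>(i, j). r i * f i j)) =
    (\<Prod>i<n. r i) * Determinant.det (mat n n (\<lambda>(i, j). f i j))"
  unfolding det_mat_leibniz
  by (simp add: prod.distrib sum_distrib_left mult_ac)

lemma det_scale_columns:
  fixes c :: "nat \<Rightarrow> 'a :: comm_ring_1"
  shows "Determinant.det (mat n n (\<lambda>(i, j). f i j * c j)) =
    (\<Prod>j<n. c j) * Determinant.det (mat n n (\<lambda>(i, j). f i j))"
proof -
  have "mat n n (\<lambda>(i, j). f i j * c j) = transpose_mat (mat n n (\<lambda>(i, j). c i * f j i))"
    by (rule eq_matI) auto
  then have "Determinant.det (mat n n (\<lambda>(i, j). f i j * c j)) =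
      Determinant.det (mat n n (\<lambda>(i, j). c i * f j i))"
    by (simp add: det_transpose[OF mat_carrier])
  also have "\<dots> = (\<Prod>j<n. c j) * Determinant.det (mat n n (\<lambda>(i, j). f j i))"
    by (rule det_scale_rows)
  also have "mat n n (\<lambda>(i, j). f j i) = transpose_mat (mat n n (\<lambda>(i, j). f i j))"
    by (rule eq_matI) auto
  finally show ?thesis
    by (simp add: det_transpose[OF mat_carrier])
qed

text \<open>Row \<open>i\<close> minus row \<open>i - 1\<close> is \<open>L * M\<close> for the unitriangular bidiagonal matrix \<open>L\<close>.\<close>

lemma det_first_column_ones:
  fixes M :: "'a :: comm_ring_1 mat"
  assumes M: "M \<in> carrier_mat n n" and "n > 0" and ones: "\<And>i. i < n \<Longrightarrow> M $$ (i, 0) = 1"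
  shows "Determinant.det M =
    Determinant.det (mat (n - 1) (n - 1) (\<lambda>(i, j). M $$ (i + 1, j + 1) - M $$ (i, j + 1)))"
proof -
  define L :: "'a mat" where
    "L = mat n n (\<lambda>(i, k). (if k = i then 1 else 0) - (if 0 < i \<and> k = i - 1 then 1 else 0))"
  define B where "B = L * M"
  have L: "L \<in> carrier_mat n n" by (simp add: L_def)
  have B: "B \<in> carrier_mat n n" using L M by (simp add: B_def)
  have "diag_mat L = replicate n 1"
    by (rule nth_equalityI) (auto simp: diag_mat_def L_def)
  then have "Determinant.det L = 1"
    by (subst det_lower_triangular[of n]) (auto simp: L, auto simp: L_def)
  then have det_B: "Determinant.det B = Determinant.det M"
    using det_mult[OF L M] by (simp add: B_def)
  have B_entry: "B $$ (i, j) = M $$ (i, j) - (if i > 0 then M $$ (i - 1, j) else 0)"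
    if "i < n" "j < n" for i j
  proof -
    have "B $$ (i, j) = (\<Sum>k<n. ((if k = i then 1 else 0) - (if 0 < i \<and> k = i - 1 then 1 else 0)) * M $$ (k, j))"
      using that M by (simp add: B_def L_def scalar_prod_def atLeast0LessThan)
    also have "\<dots> = (\<Sum>k<n. if k = i then M $$ (k, j) else 0) -
        (\<Sum>k<n. if 0 < i \<and> k = i - 1 then M $$ (k, j) else 0)"
      by (subst sum_subtractf[symmetric]) (rule sum.cong, auto)
    also have "\<dots> = M $$ (i, j) - (if i > 0 then M $$ (i - 1, j) else 0)"
      using that by (cases "i > 0") auto
    finally show ?thesis .
  qed
  have minor: "mat_delete B 0 0 = mat (n - 1) (n - 1) (\<lambda>(i, j). M $$ (i + 1, j + 1) - M $$ (i, j + 1))"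
    using B by (intro eq_matI) (auto simp: mat_delete_def B_entry)
  have "Determinant.det M = (\<Sum>i<n. B $$ (i, 0) * cofactor B i 0)"
    using laplace_expansion_column[OF B \<open>n > 0\<close>] det_B by simp
  also have "\<dots> = (\<Sum>i<n. if i = 0 then cofactor B 0 0 else 0)"
    using ones \<open>n > 0\<close> by (intro sum.cong) (auto simp: B_entry)
  also have "\<dots> = Determinant.det (mat_delete B 0 0)"
    using \<open>n > 0\<close> by (simp add: cofactor_def)
  finally show ?thesis
    unfolding minor .
qed

lemma det_exp_kernel_row_differences:
  fixes x y :: "nat \<Rightarrow> real"
  assumes "n > 0"
  shows "Determinant.det (mat n n (\<lambda>(i, j). exp (x i * y j))) =
    exp ((\<Sum>i<n. x i) * y 0) * Determinant.det (mat (n - 1) (n - 1)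
      (\<lambda>(i, j). exp (x (i + 1) * (y (j + 1) - y 0)) - exp (x i * (y (j + 1) - y 0))))"
proof -
  let ?M = "mat n n (\<lambda>(i, j). exp (x i * (y j - y 0)))"
  have "Determinant.det (mat n n (\<lambda>(i, j). exp (x i * y j))) =
      Determinant.det (mat n n (\<lambda>(i, j). exp (x i * y 0) * exp (x i * (y j - y 0))))"
    by (simp add: exp_add[symmetric] algebra_simps)
  also have "\<dots> = (\<Prod>i<n. exp (x i * y 0)) * Determinant.det ?M"
    by (rule det_scale_rows)
  also have "(\<Prod>i<n. exp (x i * y 0)) = exp ((\<Sum>i<n. x i) * y 0)"
    by (simp add: exp_sum sum_distrib_right)
  also have "Determinant.det ?M =
      Determinant.det (mat (n - 1) (n - 1) (\<lambda>(i, j). ?M $$ (i + 1, j + 1) - ?M $$ (i, j + 1)))"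
    using \<open>n > 0\<close> by (intro det_first_column_ones) auto
  also have "mat (n - 1) (n - 1) (\<lambda>(i, j). ?M $$ (i + 1, j + 1) - ?M $$ (i, j + 1)) =
      mat (n - 1) (n - 1) (\<lambda>(i, j). exp (x (i + 1) * (y (j + 1) - y 0)) - exp (x i * (y (j + 1) - y 0)))"
    by (intro eq_matI) auto
  finally show ?thesis .
qed

lemma has_integral_exp_mult:
  fixes a b u :: real
  assumes "a \<le> b" "u \<noteq> 0"
  shows "((\<lambda>s. exp (s * u)) has_integral (exp (b * u) - exp (a * u)) / u) {a..b}"
proof -
  have "((\<lambda>s. exp (s * u)) has_integral (exp (b * u) / u - exp (a * u) / u)) {a..b}"
  proof (rule fundamental_theorem_of_calculus[OF assms(1)])
    fix s assume "s \<in> {a..b}"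
    have "((\<lambda>s. exp (s * u) / u) has_real_derivative (exp (s * u) * u / u)) (at s within {a..b})"
      by (auto intro!: derivative_eq_intros)
    then show "((\<lambda>s. exp (s * u) / u) has_vector_derivative exp (s * u)) (at s within {a..b})"
      using assms(2) by (simp add: has_real_derivative_iff_has_vector_derivative)
  qed
  then show ?thesis by (simp add: diff_divide_distrib)
qed

text \<open>The variables \<open>t_m, \<dots>, t_{k-1}\<close> are not yet integrated out; they are read off \<open>t0\<close>.\<close>

lemma iter_integral_sum_prod:
  fixes P :: "'p set" and g :: "'p \<Rightarrow> nat \<Rightarrow> real \<Rightarrow> real"
  assumes "finite P" "m \<le> k" "\<And>p i. p \<in> P \<Longrightarrow> i < k \<Longrightarrow> g p i integrable_on {a i..b i}"
  shows "iter_integral m a b (\<lambda>t. \<Sum>p\<in>P. c p * (\<Prod>i<k. g p i (t i))) t0 =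
    (\<Sum>p\<in>P. c p * (\<Prod>i<m. integral {a i..b i} (g p i)) * (\<Prod>i\<in>{m..<k}. g p i (t0 i)))"
  using assms(2)
proof (induction m arbitrary: t0)
  case 0
  then show ?case by (simp add: atLeast0LessThan)
next
  case (Suc m)
  have "m < k" using Suc.prems by simp
  then have split_off_m: "(\<Prod>i\<in>{m..<k}. g p i ((t0(m := s)) i)) =
      g p m s * (\<Prod>i\<in>{Suc m..<k}. g p i (t0 i))" for p s
    by (simp add: prod.atLeast_Suc_lessThan)
  have "iter_integral (Suc m) a b (\<lambda>t. \<Sum>p\<in>P. c p * (\<Prod>i<k. g p i (t i))) t0 =
      integral {a m..b m} (\<lambda>s. \<Sum>p\<in>P. c p * (\<Prod>i<m. integral {a i..b i} (g p i)) *
        (g p m s * (\<Prod>i\<in>{Suc m..<k}. g p i (t0 i))))"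
    by (simp only: iter_integral.simps Suc.IH[OF Suc_leD[OF Suc.prems]] split_off_m)
  also have "\<dots> = (\<Sum>p\<in>P. integral {a m..b m} (\<lambda>s. c p * (\<Prod>i<m. integral {a i..b i} (g p i)) *
        (g p m s * (\<Prod>i\<in>{Suc m..<k}. g p i (t0 i)))))"
    using assms(3) \<open>m < k\<close>
    by (intro integral_sum[OF assms(1)]) (auto intro!: integrable_on_mult_right integrable_on_mult_left)
  also have "\<dots> = (\<Sum>p\<in>P. c p * (\<Prod>i<Suc m. integral {a i..b i} (g p i)) *
        (\<Prod>i\<in>{Suc m..<k}. g p i (t0 i)))"
    by (simp add: integral_mult_right integral_mult_left mult_ac)
  finally show ?case .
qed

lemma iter_integral_det:
  fixes g :: "nat \<Rightarrow> nat \<Rightarrow> real \<Rightarrow> real"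
  assumes "\<And>i j. i < n \<Longrightarrow> j < n \<Longrightarrow> g i j integrable_on {a i..b i}"
  shows "iter_integral n a b (\<lambda>t. Determinant.det (mat n n (\<lambda>(i, j). g i j (t i)))) t0 =
    Determinant.det (mat n n (\<lambda>(i, j). integral {a i..b i} (g i j)))"
proof -
  have "g i (p i) integrable_on {a i..b i}" if "p permutes {..<n}" "i < n" for p i
    using that assms permutes_in_image[of p "{..<n}" i] by simp
  then show ?thesis
    unfolding det_mat_leibniz
    by (subst iter_integral_sum_prod[where g = "\<lambda>p i. g i (p i)"])
      (auto simp: finite_permutations)
qed

lemma less_of_consecutive_less:
  fixes f :: "nat \<Rightarrow> 'a :: order"
  assumes step: "\<And>i. i + 1 < n \<Longrightarrow> f i < f (i + 1)" and "i < j" "j < n"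
  shows "f i < f j"
  using assms(2,3)
proof (induction j)
  case 0
  then show ?case by simp
next
  case (Suc j)
  have "f j < f (Suc j)" using step[of j] Suc.prems by simp
  then show ?case
    using Suc by (cases "i = j") auto
qed

theorem lemma1:
  fixes n :: nat and x y :: "nat \<Rightarrow> real"
  assumes "n \<ge> 3"
    and "\<And>i. i + 1 < n \<Longrightarrow> x i < x (i + 1)"
    and "\<And>i. i + 1 < n \<Longrightarrow> y i < y (i + 1)"
  shows "Determinant.det (mat n n (\<lambda>(i, j). exp (x i * y j))) =
    exp ((\<Sum>i<n. x i) * y 0) * (\<Prod>j<n - 1. y (j + 1) - y 0) *
    iter_integral (n - 1) x (\<lambda>k. x (k + 1))
      (\<lambda>t. Determinant.det (mat (n - 1) (n - 1) (\<lambda>(i, j). exp (t i * (y (j + 1) - y 0)))))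
      (\<lambda>_. 0)"
proof -
  define N u where "N = n - 1" and "u j = y (j + 1) - y 0" for j
  have u_pos: "u j > 0" if "j < N" for j
    using less_of_consecutive_less[of n y 0 "j + 1", OF assms(3)] that
    by (simp add: N_def u_def)
  have exp_integral: "((\<lambda>s. exp (s * u j)) has_integral
      (exp (x (i + 1) * u j) - exp (x i * u j)) / u j) {x i..x (i + 1)}" if "i < N" "j < N" for i j
    using that assms(2)[of i] u_pos[of j]
    by (intro has_integral_exp_mult) (auto simp: N_def less_imp_le)
  have "mat N N (\<lambda>(i, j). exp (x (i + 1) * u j) - exp (x i * u j)) =
      mat N N (\<lambda>(i, j). integral {x i..x (i + 1)} (\<lambda>s. exp (s * u j)) * u j)"
    using integral_unique[OF exp_integral] u_pos by (intro eq_matI) force+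
  then have "Determinant.det (mat n n (\<lambda>(i, j). exp (x i * y j))) =
      exp ((\<Sum>i<n. x i) * y 0) * (\<Prod>j<N. u j) *
      Determinant.det (mat N N (\<lambda>(i, j). integral {x i..x (i + 1)} (\<lambda>s. exp (s * u j))))"
    using assms(1) by (simp add: det_exp_kernel_row_differences det_scale_columns N_def u_def)
  also have "Determinant.det (mat N N (\<lambda>(i, j). integral {x i..x (i + 1)} (\<lambda>s. exp (s * u j)))) =
      iter_integral N x (\<lambda>k. x (k + 1)) (\<lambda>t. Determinant.det (mat N N (\<lambda>(i, j). exp (t i * u j)))) (\<lambda>_. 0)"
    using exp_integral by (intro iter_integral_det[symmetric]) blast
  finally show ?thesis
    by (simp add: N_def u_def)
qed

end
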